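(* The space $L(\omega_1)$ is totally Lindelöf.
   Context: $L(\omega_1)$ is the set $\omega_1+1$ with the topology in which every $\alpha<\omega_1$ is isolated and the sets $]\alpha,\omega_1]=\{\gamma:\alpha<\gamma\le\omega_1\}$, $\alpha<\omega_1$, form a local base at $\omega_1$. A filter base on $X$ is a nonempty $\mathcal{F}\subseteq\mathcal{P}(X)$ with $\emptyset\notin\mathcal{F}$ and closed under pairwise intersections; it is stable under countable intersections if for every countable $S\subseteq\mathcal{F}$ there is $H\in\mathcal{F}$ with $H\subseteq\bigcap S$. $ad(\mathcal{F})=\bigcap\{\overline{F}:F\in\mathcal{F}\}$. A filter base $\mathcal{F}$ is total if every filter base $\mathcal{H}\supseteq\mathcal{F}$ satisfies $ad(\mathcal{H})\neq\emptyset$. $X$ is totally Lindelöf if every filter base on $X$ stable under countable intersections is contained in a total filter base on $X$ stable under countable intersections. *)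

theory Defs
  imports "HOL-Analysis.Analysis"
begin

definition filter_base :: "'a set \<Rightarrow> 'a set set \<Rightarrow> bool" where
  "filter_base X \<F> \<longleftrightarrow> \<F> \<noteq> {} \<and> \<F> \<subseteq> Pow X \<and> {} \<notin> \<F> \<and>
     (\<forall>A\<in>\<F>. \<forall>B\<in>\<F>. A \<inter> B \<in> \<F>)"

definition stable_countable_inter :: "'a set set \<Rightarrow> bool" where
  "stable_countable_inter \<F> \<longleftrightarrow>
     (\<forall>S. S \<subseteq> \<F> \<and> countable S \<longrightarrow> (\<exists>H\<in>\<F>. H \<subseteq> \<Inter>S))"

definition adherence :: "'a topology \<Rightarrow> 'a set set \<Rightarrow> 'a set" where
  "adherence T \<F> = (\<Inter>F\<in>\<F>. T closure_of F)"

definition total_filter_base :: "'a topology \<Rightarrow> 'a set set \<Rightarrow> bool" where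
  "total_filter_base T \<F> \<longleftrightarrow> filter_base (topspace T) \<F> \<and>
     (\<forall>\<H>. filter_base (topspace T) \<H> \<and> \<F> \<subseteq> \<H> \<longrightarrow> adherence T \<H> \<noteq> {})"

definition totally_lindelof :: "'a topology \<Rightarrow> bool" where
  "totally_lindelof T \<longleftrightarrow>
     (\<forall>\<F>. filter_base (topspace T) \<F> \<and> stable_countable_inter \<F> \<longrightarrow>
        (\<exists>\<G>. \<F> \<subseteq> \<G> \<and> filter_base (topspace T) \<G> \<and> stable_countable_inter \<G> \<and>
             total_filter_base T \<G>))"

text \<open>The ordinal omega_1 is represented by a well-ordered type 'a of order
type omega_1 (uncountable, every proper initial segment countable); omega_1 + 1 is
'a option, with Some alpha the countable ordinal alpha and None the point omega_1.
Every Some alpha is isolated; the sets ]alpha, omega_1] form a local base at None.\<close>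
definition L_omega1 :: "('a::wellorder) option topology" where
  "L_omega1 = topology (\<lambda>U. None \<in> U \<longrightarrow> (\<exists>\<alpha>. \<forall>\<gamma>. \<alpha> < \<gamma> \<longrightarrow> Some \<gamma> \<in> U))"

end

theory Submission
  imports Defs
begin

text \<open>If some point lies in every member of the filter base, the principal filter of that point
  is a total extension stable under countable intersections. Otherwise every member is uncountable
  (a countable member could be cut away point by point by countably many members), so every member
  meets every tail \<open>]\<alpha>, \<omega>\<^sub>1]\<close>; adjoining the tails then gives a filter base converging to
  \<open>\<omega>\<^sub>1\<close>, hence total, and it stays stable under countable intersections because countably many
  countable ordinals are bounded below \<open>\<omega>\<^sub>1\<close>.\<close>

lemma total_filter_base_if_converges:
  assumes "filter_base (topspace X) \<G>" and "x \<in> topspace X"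
    and "\<And>U. openin X U \<Longrightarrow> x \<in> U \<Longrightarrow> \<exists>B\<in>\<G>. B \<subseteq> U"
  shows "total_filter_base X \<G>"
  unfolding total_filter_base_def
proof (intro conjI allI impI assms(1))
  fix \<H> assume \<H>: "filter_base (topspace X) \<H> \<and> \<G> \<subseteq> \<H>"
  have "x \<in> X closure_of A" if "A \<in> \<H>" for A
    unfolding in_closure_of
  proof (intro conjI allI impI assms(2))
    fix U assume "x \<in> U \<and> openin X U"
    then obtain B where "B \<in> \<G>" "B \<subseteq> U" using assms(3) by blast
    then have "A \<inter> B \<noteq> {}" using \<H> that unfolding filter_base_def by (metis subsetD)
    then show "\<exists>y. y \<in> A \<and> y \<in> U" using \<open>B \<subseteq> U\<close> by blast
  qed
  then show "adherence X \<H> \<noteq> {}" unfolding adherence_def by blast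
qed

lemma filter_base_principal: "x \<in> X \<Longrightarrow> filter_base X {A. x \<in> A \<and> A \<subseteq> X}"
  unfolding filter_base_def by auto

lemma stable_countable_inter_principal:
  "x \<in> X \<Longrightarrow> stable_countable_inter {A. x \<in> A \<and> A \<subseteq> X}"
  unfolding stable_countable_inter_def by (intro allI impI bexI[of _ "{x}"]) auto

lemma total_filter_base_principal:
  "x \<in> topspace X \<Longrightarrow> total_filter_base X {A. x \<in> A \<and> A \<subseteq> topspace X}"
proof (rule total_filter_base_if_converges)
  show "\<exists>B\<in>{A. x \<in> A \<and> A \<subseteq> topspace X}. B \<subseteq> U" if "openin X U" "x \<in> U" for U
    using that openin_subset by blast
qed (simp_all add: filter_base_principal)

lemma fixed_filter_base_extends_to_total:
  assumes "filter_base (topspace X) \<F>" and "x \<in> \<Inter>\<F>"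
  shows "\<exists>\<G>. \<F> \<subseteq> \<G> \<and> filter_base (topspace X) \<G> \<and> stable_countable_inter \<G> \<and>
             total_filter_base X \<G>"
proof -
  have "x \<in> topspace X" using assms unfolding filter_base_def by blast
  moreover have "\<F> \<subseteq> {A. x \<in> A \<and> A \<subseteq> topspace X}" using assms unfolding filter_base_def by blast
  ultimately show ?thesis
    by (blast intro: filter_base_principal stable_countable_inter_principal total_filter_base_principal)
qed

lemma stable_free_filter_base_member_uncountable:
  assumes "filter_base X \<F>" and "stable_countable_inter \<F>" and "\<Inter>\<F> = {}" and "A \<in> \<F>"
  shows "uncountable A"
proof
  assume "countable A"
  have "\<forall>y. \<exists>B. B \<in> \<F> \<and> y \<notin> B" using assms(3) by blast
  then obtain cut where cut: "\<And>y. cut y \<in> \<F> \<and> y \<notin> cut y" by (auto dest!: choice)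
  have "insert A (cut ` A) \<subseteq> \<F>" and "countable (insert A (cut ` A))"
    using cut assms(4) \<open>countable A\<close> by auto
  then obtain H where "H \<in> \<F>" and H: "H \<subseteq> \<Inter>(insert A (cut ` A))"
    using assms(2) unfolding stable_countable_inter_def by meson
  then obtain y where "y \<in> H" using assms(1) unfolding filter_base_def by (metis ex_in_conv)
  then have "y \<in> A" and "y \<in> cut y" using H by auto
  then show False using cut by blast
qed

lemma istopology_L_omega1:
  "istopology (\<lambda>U::'a::wellorder option set. None \<in> U \<longrightarrow> (\<exists>\<alpha>. \<forall>\<gamma>. \<alpha> < \<gamma> \<longrightarrow> Some \<gamma> \<in> U))"
  unfolding istopology_def
proof (intro conjI allI impI)
  fix S T :: "'a option set"
  assume "None \<in> S \<longrightarrow> (\<exists>\<alpha>. \<forall>\<gamma>. \<alpha> < \<gamma> \<longrightarrow> Some \<gamma> \<in> S)"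
    and "None \<in> T \<longrightarrow> (\<exists>\<alpha>. \<forall>\<gamma>. \<alpha> < \<gamma> \<longrightarrow> Some \<gamma> \<in> T)" and "None \<in> S \<inter> T"
  then obtain a b where "\<forall>\<gamma>. a < \<gamma> \<longrightarrow> Some \<gamma> \<in> S" "\<forall>\<gamma>. b < \<gamma> \<longrightarrow> Some \<gamma> \<in> T" by auto
  then show "\<exists>\<alpha>. \<forall>\<gamma>. \<alpha> < \<gamma> \<longrightarrow> Some \<gamma> \<in> S \<inter> T"
    by (intro exI[of _ "max a b"]) auto
qed blast

lemma openin_L_omega1:
  "openin (L_omega1::'a::wellorder option topology) U \<longleftrightarrow>
     (None \<in> U \<longrightarrow> (\<exists>\<alpha>. \<forall>\<gamma>. \<alpha> < \<gamma> \<longrightarrow> Some \<gamma> \<in> U))"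
  unfolding L_omega1_def topology_inverse'[OF istopology_L_omega1] by simp

lemma topspace_L_omega1: "topspace (L_omega1::'a::wellorder option topology) = UNIV"
  unfolding topspace_def openin_L_omega1 by auto

definition tail :: "'a::linorder \<Rightarrow> 'a option set" where
  "tail \<alpha> = insert None (Some ` {\<gamma>. \<alpha> < \<gamma>})"

lemma tail_max_subset: "tail (max \<alpha> \<beta>) \<subseteq> tail \<alpha> \<inter> tail \<beta>"
  unfolding tail_def by auto

lemma tail_antimono: "\<alpha> \<le> \<beta> \<Longrightarrow> tail \<beta> \<subseteq> tail \<alpha>"
  unfolding tail_def by auto

lemma countable_Compl_tail:
  fixes \<alpha> :: "'a::linorder"
  assumes "\<And>\<alpha>::'a. countable {\<beta>. \<beta> < \<alpha>}"
  shows "countable (- tail \<alpha>)"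
proof -
  have "- tail \<alpha> \<subseteq> Some ` insert \<alpha> {\<beta>. \<beta> < \<alpha>}"
  proof
    fix x assume "x \<in> - tail \<alpha>"
    then obtain \<gamma> where "x = Some \<gamma>" "\<not> \<alpha> < \<gamma>" unfolding tail_def by (cases x) auto
    then show "x \<in> Some ` insert \<alpha> {\<beta>. \<beta> < \<alpha>}" by (auto simp: not_less le_less)
  qed
  moreover have "countable (Some ` insert \<alpha> {\<beta>. \<beta> < \<alpha>})"
    by (intro countable_image countable_insert assms)
  ultimately show ?thesis by (rule countable_subset)
qed

lemma uncountable_meets_tail:
  fixes \<alpha> :: "'a::linorder"
  assumes "\<And>\<alpha>::'a. countable {\<beta>. \<beta> < \<alpha>}" and "uncountable A"
  shows "A \<inter> tail \<alpha> \<noteq> {}"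
proof
  assume "A \<inter> tail \<alpha> = {}"
  then have "A \<subseteq> - tail \<alpha>" by blast
  then show False using countable_Compl_tail[OF assms(1)] assms(2) countable_subset by blast
qed

lemma open_None_contains_tail:
  assumes "openin L_omega1 U" and "None \<in> U"
  shows "\<exists>\<alpha>. tail \<alpha> \<subseteq> U"
  using assms unfolding openin_L_omega1 tail_def by blast

lemma countable_imp_bdd_above:
  assumes "uncountable (UNIV :: 'a::wellorder set)"
    and "\<And>\<alpha>::'a. countable {\<beta>. \<beta> < \<alpha>}" and "countable (S::'a set)"
  shows "bdd_above S"
proof (rule ccontr)
  assume "\<not> bdd_above S"
  then have "UNIV = (\<Union>s\<in>S. {\<beta>. \<beta> < s})" by (auto simp: bdd_above_def not_le)
  then show False using assms by (metis countable_UN)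
qed

definition tail_extension :: "'a::linorder option set set \<Rightarrow> 'a option set set" where
  "tail_extension \<F> = {A. \<exists>F\<in>\<F>. \<exists>\<alpha>. F \<inter> tail \<alpha> \<subseteq> A}"

lemma subset_tail_extension: "\<F> \<subseteq> tail_extension \<F>"
  unfolding tail_extension_def by blast

lemma tail_in_tail_extension: "\<F> \<noteq> {} \<Longrightarrow> tail \<alpha> \<in> tail_extension \<F>"
  unfolding tail_extension_def by blast

lemma filter_base_tail_extension:
  assumes "\<And>\<alpha>::'a::linorder. countable {\<beta>. \<beta> < \<alpha>}"
    and "filter_base UNIV \<F>" and "\<And>F. F \<in> \<F> \<Longrightarrow> uncountable (F::'a option set)"
  shows "filter_base UNIV (tail_extension \<F>)"
  unfolding filter_base_def
proof (intro conjI ballI)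
  have "\<F> \<noteq> {}" using assms(2) unfolding filter_base_def by blast
  then show "tail_extension \<F> \<noteq> {}" using tail_in_tail_extension by blast
  show "{} \<notin> tail_extension \<F>"
  proof
    assume "{} \<in> tail_extension \<F>"
    then obtain F \<alpha> where "F \<in> \<F>" "F \<inter> tail \<alpha> = {}" unfolding tail_extension_def by blast
    then show False using uncountable_meets_tail[OF assms(1) assms(3)] by blast
  qed
  fix A B assume "A \<in> tail_extension \<F>" "B \<in> tail_extension \<F>"
  then obtain F \<alpha> G \<beta> where "F \<in> \<F>" "F \<inter> tail \<alpha> \<subseteq> A" "G \<in> \<F>" "G \<inter> tail \<beta> \<subseteq> B"
    unfolding tail_extension_def by blast
  then have "F \<inter> G \<inter> tail (max \<alpha> \<beta>) \<subseteq> A \<inter> B" using tail_max_subset[of \<alpha> \<beta>] by blast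
  moreover have "F \<inter> G \<in> \<F>" using assms(2) \<open>F \<in> \<F>\<close> \<open>G \<in> \<F>\<close> unfolding filter_base_def by blast
  ultimately show "A \<inter> B \<in> tail_extension \<F>" unfolding tail_extension_def by blast
qed simp

lemma stable_countable_inter_tail_extension:
  assumes "uncountable (UNIV :: 'a::wellorder set)"
    and "\<And>\<alpha>::'a. countable {\<beta>. \<beta> < \<alpha>}" and "stable_countable_inter (\<F>::'a option set set)"
  shows "stable_countable_inter (tail_extension \<F>)"
  unfolding stable_countable_inter_def
proof (intro allI impI)
  fix S assume S: "S \<subseteq> tail_extension \<F> \<and> countable S"
  then have "\<forall>A\<in>S. \<exists>F\<in>\<F>. \<exists>\<alpha>. F \<inter> tail \<alpha> \<subseteq> A"
    unfolding tail_extension_def by blast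
  then obtain base where base: "\<forall>A\<in>S. base A \<in> \<F> \<and> (\<exists>\<alpha>. base A \<inter> tail \<alpha> \<subseteq> A)"
    by (metis bchoice)
  then obtain level where level: "\<forall>A\<in>S. base A \<inter> tail (level A) \<subseteq> A"
    by (metis bchoice)
  have "base ` S \<subseteq> \<F>" and "countable (base ` S)" using base S by auto
  then obtain H where "H \<in> \<F>" and H: "H \<subseteq> \<Inter>(base ` S)"
    using assms(3) unfolding stable_countable_inter_def by blast
  obtain \<beta> where \<beta>: "\<And>A. A \<in> S \<Longrightarrow> level A \<le> \<beta>"
    using countable_imp_bdd_above[OF assms(1,2), of "level ` S"] S by (auto simp: bdd_above_def)
  have "H \<inter> tail \<beta> \<subseteq> \<Inter>S"
    using H level tail_antimono[OF \<beta>] by blast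
  moreover have "H \<inter> tail \<beta> \<in> tail_extension \<F>"
    unfolding tail_extension_def using \<open>H \<in> \<F>\<close> by blast
  ultimately show "\<exists>H\<in>tail_extension \<F>. H \<subseteq> \<Inter>S" by blast
qed

lemma free_filter_base_extends_to_total:
  assumes "uncountable (UNIV :: 'a::wellorder set)"
    and "\<And>\<alpha>::'a. countable {\<beta>. \<beta> < \<alpha>}"
    and "filter_base UNIV \<F>" and "stable_countable_inter \<F>" and "\<Inter>\<F> = {}"
  shows "\<exists>\<G>. \<F> \<subseteq> \<G> \<and> filter_base UNIV \<G> \<and> stable_countable_inter \<G> \<and>
             total_filter_base (L_omega1::'a option topology) \<G>"
proof (intro exI conjI)
  show fb: "filter_base UNIV (tail_extension \<F>)"
    using filter_base_tail_extension[OF assms(2,3)]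
      stable_free_filter_base_member_uncountable[OF assms(3,4,5)] by blast
  show "total_filter_base L_omega1 (tail_extension \<F>)"
  proof (rule total_filter_base_if_converges)
    show "filter_base (topspace L_omega1) (tail_extension \<F>)"
      using fb by (simp add: topspace_L_omega1)
    show "None \<in> topspace L_omega1" by (simp add: topspace_L_omega1)
    have "\<F> \<noteq> {}" using assms(3) unfolding filter_base_def by blast
    then show "\<exists>B\<in>tail_extension \<F>. B \<subseteq> U" if "openin L_omega1 U" "None \<in> U" for U
      using open_None_contains_tail[OF that] tail_in_tail_extension by blast
  qed
qed (simp_all add: subset_tail_extension stable_countable_inter_tail_extension assms)

theorem proposition1p1:
  assumes "uncountable (UNIV :: ('a::wellorder) set)"
    and "\<And>\<alpha>::'a. countable {\<beta>. \<beta> < \<alpha>}"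
  shows "totally_lindelof (L_omega1 :: 'a option topology)"
  unfolding totally_lindelof_def
proof (intro allI impI)
  fix \<F> :: "'a option set set"
  assume "filter_base (topspace L_omega1) \<F> \<and> stable_countable_inter \<F>"
  then have \<F>: "filter_base UNIV \<F>" "stable_countable_inter \<F>" by (simp_all add: topspace_L_omega1)
  show "\<exists>\<G>. \<F> \<subseteq> \<G> \<and> filter_base (topspace L_omega1) \<G> \<and> stable_countable_inter \<G> \<and>
            total_filter_base L_omega1 \<G>"
  proof (cases "\<Inter>\<F> = {}")
    case True
    from free_filter_base_extends_to_total[OF assms \<F> True] show ?thesis
      unfolding topspace_L_omega1 .
  next
    case False
    then obtain x where "x \<in> \<Inter>\<F>" by blast
    from fixed_filter_base_extends_to_total[of L_omega1, OF _ this] \<F>(1) show ?thesis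
      unfolding topspace_L_omega1 by blast
  qed
qed

end
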